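(* For every integer $n\ge 5$, $$\operatorname{str}(Q_n)\le \operatorname{str}_{f_{n-2}}(Q_{n-2})+3\cdot 2^{n-2}+\binom{n-3}{\lceil (n-3)/2\rceil}+\binom{n-2}{\lceil (n-2)/2\rceil}.$$
   Context: $Q_n$ is the $n$-dimensional hypercube: vertices are the $n$-bit strings, adjacent iff they differ in exactly one position. For a bijection $f:V(G)\to\{1,\dots,|V(G)|\}$ (a vertex ordering), $\operatorname{str}_f(G)=\max\{f(u)+f(v):uv\in E(G)\}$, and the strength $\operatorname{str}(G)$ is the minimum of $\operatorname{str}_f(G)$ over all such bijections $f$. An $n$-bit string is $x_1\cdots x_n$, $x_i\in\{0,1\}$; its weight is its number of $1$s. Lexicographic order: $x<y$ if for some $k$, $x_j=y_j$ for $j<k$ and $x_k<y_k$. $S_n^i$ is the sequence of $n$-bit strings of weight $i$ in increasing lexicographic order; $R_n^i$ is the same set in decreasing lexicographic order. $S_n$ is the concatenation $(R_n^1,R_n^3,\dots,R_n^{n-1},S_n^n,S_n^{n-2},\dots,S_n^2,S_n^0)$ for even $n$ and $(R_n^1,R_n^3,\dots,R_n^{n-2},R_n^n,S_n^{n-1},\dots,S_n^2,S_n^0)$ for odd $n$; $f_n$ maps the string in position $j$ of $S_n$ to $j$. *)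

theory Defs
  imports Complex_Main "HOL-Library.List_Lexorder"
begin

definition str_of :: "('a \<Rightarrow> nat) \<Rightarrow> 'a set \<Rightarrow> ('a \<Rightarrow> 'a \<Rightarrow> bool) \<Rightarrow> nat" where
  "str_of f V E = Max {f u + f v | u v. u \<in> V \<and> v \<in> V \<and> E u v}"

definition strength :: "'a set \<Rightarrow> ('a \<Rightarrow> 'a \<Rightarrow> bool) \<Rightarrow> nat" where
  "strength V E = Min {str_of f V E | f. bij_betw f V {1..card V}}"

text \<open>Vertices: n-bit strings, as boolean lists of length n (False = 0, True = 1).\<close>

definition Qv :: "nat \<Rightarrow> bool list set" where
  "Qv n = {x. length x = n}"

definition Qadj :: "nat \<Rightarrow> bool list \<Rightarrow> bool list \<Rightarrow> bool" where
  "Qadj n x y \<longleftrightarrow> card {i. i < n \<and> x ! i \<noteq> y ! i} = 1"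

definition weight :: "bool list \<Rightarrow> nat" where
  "weight x = length (filter id x)"

text \<open>On bool lists of equal length, the order from List_Lexorder is the
  lexicographic order with False < True.\<close>

definition Sseq :: "nat \<Rightarrow> nat \<Rightarrow> bool list list" where
  "Sseq n i = sorted_list_of_set {x. length x = n \<and> weight x = i}"

definition Rseq :: "nat \<Rightarrow> nat \<Rightarrow> bool list list" where
  "Rseq n i = rev (Sseq n i)"

text \<open>S_n: R_n^i for odd i in increasing order, followed by S_n^i for even i
  in decreasing order (this covers both the even and the odd case).\<close>

definition Sn :: "nat \<Rightarrow> bool list list" where
  "Sn n = concat (map (Rseq n) (filter odd [0..<Suc n]))
        @ concat (map (Sseq n) (rev (filter even [0..<Suc n])))"

definition fn :: "nat \<Rightarrow> bool list \<Rightarrow> nat" where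
  "fn n x = (THE j. 1 \<le> j \<and> j \<le> length (Sn n) \<and> Sn n ! (j - 1) = x)"

end

theory Submission
  imports Defs "HOL-Library.FuncSet"
begin

(* The ordering f_n by itself yields the bound. The position of x in S_n is one plus the
   number of strings preceding it: whole weight layers of a suitable parity, plus the
   lexicographic rank of x inside its own layer. For an edge p = a1b, q = a0b of Q_n the
   layer counts of p and q add up, via the alternating partial row sums of Pascal's
   triangle, to 2^n + 1 up to a correction term; this term is a sum of one binomial
   coefficient per bit of a, so its size is at most the sum of the central binomial
   coefficients C(j, j div 2), j < n - 1, and it reaches that sum on alternating strings.
   Hence str_{f_n}(Q_n) = 2^n + 1 + sum_{j < n - 1} C(j, j div 2) exactly, and the theorem
   is this formula for n compared with the same formula for n - 2. *)

section \<open>Bit strings counted by weight\<close>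

lemma weight_Nil [simp]: "weight [] = 0"
  by (simp add: weight_def)

lemma weight_Cons [simp]: "weight (c # x) = (if c then Suc (weight x) else weight x)"
  by (simp add: weight_def)

lemma weight_append [simp]: "weight (x @ y) = weight x + weight y"
  by (simp add: weight_def)

lemma weight_le_length: "weight x \<le> length x"
  by (simp add: weight_def)

lemma finite_bool_lists_length: "finite {y :: bool list. length y = n \<and> P y}"
  using finite_lists_length_eq[of "UNIV :: bool set" n] by (rule finite_subset[rotated]) auto

lemma finite_Qv: "finite (Qv n)"
  using finite_bool_lists_length[of n "\<lambda>_. True"] by (simp add: Qv_def)

lemma card_Qv: "card (Qv n) = 2 ^ n"
  using card_lists_length_eq[of "UNIV :: bool set" n] by (simp add: Qv_def)

lemma bool_lists_length_Suc:
  "{y :: bool list. length y = Suc n \<and> P y} =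
    Cons True ` {y. length y = n \<and> P (True # y)} \<union> Cons False ` {y. length y = n \<and> P (False # y)}"
proof (intro equalityI subsetI)
  fix y assume "y \<in> {y :: bool list. length y = Suc n \<and> P y}"
  then obtain c z where "y = c # z" "length z = n" "P (c # z)"
    by (cases y) auto
  then show "y \<in> Cons True ` {y. length y = n \<and> P (True # y)} \<union> Cons False ` {y. length y = n \<and> P (False # y)}"
    by (cases c) auto
qed auto

lemma card_bool_lists_length_Suc:
  "card {y :: bool list. length y = Suc n \<and> P y} =
    card {y. length y = n \<and> P (True # y)} + card {y. length y = n \<and> P (False # y)}"
  unfolding bool_lists_length_Suc
  by (subst card_Un_disjoint) (auto simp: card_image finite_bool_lists_length)

lemma card_weight_layer: "card {y :: bool list. length y = n \<and> weight y = k} = n choose k"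
proof (induction n arbitrary: k)
  case 0
  then show ?case
    by (cases k) (simp_all add: Collect_conv_if)
next
  case (Suc n)
  then show ?case
    by (cases k) (simp_all add: card_bool_lists_length_Suc)
qed

definition layer_count :: "nat \<Rightarrow> (nat \<Rightarrow> bool) \<Rightarrow> int" where
  "layer_count n P = (\<Sum>i\<le>n. if P i then int (n choose i) else 0)"

lemma card_weight_in: "int (card {y :: bool list. length y = n \<and> P (weight y)}) = layer_count n P"
proof -
  have "{y :: bool list. length y = n \<and> P (weight y)} =
      (\<Union>i\<in>{i. i \<le> n \<and> P i}. {y. length y = n \<and> weight y = i})"
    using weight_le_length by fastforce
  then have "card {y :: bool list. length y = n \<and> P (weight y)} =
      (\<Sum>i | i \<le> n \<and> P i. card {y :: bool list. length y = n \<and> weight y = i})"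
    by (simp only:) (rule card_UN_disjoint, auto simp: finite_bool_lists_length)
  also have "\<dots> = (\<Sum>i | i \<le> n \<and> P i. n choose i)"
    by (simp only: card_weight_layer)
  finally show ?thesis
    by (simp add: layer_count_def sum.If_cases Int_def conj_commute)
qed

lemma layer_count_cong: "(\<And>i. i \<le> n \<Longrightarrow> P i \<longleftrightarrow> Q i) \<Longrightarrow> layer_count n P = layer_count n Q"
  unfolding layer_count_def by (rule sum.cong) auto

lemma layer_count_True: "layer_count n (\<lambda>_. True) = 2 ^ n"
  unfolding layer_count_def by (simp flip: of_nat_sum add: choose_row_sum)

lemma layer_count_False: "layer_count n (\<lambda>_. False) = 0"
  by (simp add: layer_count_def)

lemma layer_count_add_layer:
  assumes "t \<le> n" "\<not> P t"
  shows "layer_count n P + int (n choose t) = layer_count n (\<lambda>i. P i \<or> i = t)"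
proof -
  have "layer_count n P + int (n choose t) =
      (\<Sum>i\<le>n. (if P i then int (n choose i) else 0) + (if i = t then int (n choose i) else 0))"
    using assms(1) by (simp add: layer_count_def sum.distrib)
  also have "\<dots> = layer_count n (\<lambda>i. P i \<or> i = t)"
    unfolding layer_count_def using assms(2) by (intro sum.cong) auto
  finally show ?thesis .
qed

section \<open>Positions in the ordering S_n\<close>

fun lex_rank :: "bool list \<Rightarrow> nat" where
  "lex_rank [] = 0"
| "lex_rank (c # x) = (if c then length x choose Suc (weight x) else 0) + lex_rank x"

lemma lex_rank_eq_card:
  "lex_rank x = card {y. length y = length x \<and> weight y = weight x \<and> y < x}"
proof (induction x)
  case (Cons c x)
  then show ?case
    by (cases c) (simp_all add: card_bool_lists_length_Suc card_weight_layer)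
qed simp

lemma card_lex_greater:
  "card {y. length y = length x \<and> weight y = weight x \<and> x < y} + lex_rank x + 1
    = length x choose weight x"
proof -
  let ?layer = "\<lambda>P. {y :: bool list. length y = length x \<and> weight y = weight x \<and> P y}"
  have "?layer (\<lambda>_. True) = ?layer (\<lambda>y. y < x) \<union> insert x (?layer (\<lambda>y. x < y))"
    using less_linear by blast
  moreover have "?layer (\<lambda>y. y < x) \<inter> insert x (?layer (\<lambda>y. x < y)) = {}"
    using less_asym by blast
  ultimately have "card (?layer (\<lambda>_. True)) = card (?layer (\<lambda>y. y < x)) + Suc (card (?layer (\<lambda>y. x < y)))"
    by (simp add: card_Un_disjoint finite_bool_lists_length)
  then show ?thesis
    by (simp add: card_weight_layer lex_rank_eq_card)
qed

lemma sorted_wrt_asym_distinct: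
  assumes "sorted_wrt R xs" "\<And>x y. R x y \<Longrightarrow> \<not> R y x"
  shows "distinct xs"
  using assms(1) by (induction xs) (auto dest: assms(2))

lemma sorted_wrt_card_predecessors:
  assumes sorted: "sorted_wrt R xs" and asym: "\<And>x y. R x y \<Longrightarrow> \<not> R y x" and i: "i < length xs"
  shows "card {y \<in> set xs. R y (xs ! i)} = i"
proof -
  have "{y \<in> set xs. R y (xs ! i)} = set (take i xs)"
  proof (intro equalityI subsetI)
    fix y assume "y \<in> {y \<in> set xs. R y (xs ! i)}"
    then obtain j where j: "j < length xs" "xs ! j = y" "R y (xs ! i)"
      by (auto simp: in_set_conv_nth)
    have "j < i"
      using sorted_wrt_nth_less[OF sorted, of i j] i j asym by (metis linorder_neqE_nat)
    then show "y \<in> set (take i xs)"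
      using j by (auto simp: in_set_conv_nth)
  next
    fix y assume "y \<in> set (take i xs)"
    then obtain j where "j < i" "xs ! j = y"
      by (auto simp: in_set_conv_nth)
    then show "y \<in> {y \<in> set xs. R y (xs ! i)}"
      using sorted_wrt_nth_less[OF sorted _ i] i by auto
  qed
  then show ?thesis
    using distinct_take[OF sorted_wrt_asym_distinct[OF sorted asym]] i by (simp add: distinct_card)
qed

lemma THE_position_nth:
  assumes "distinct xs" "i < length xs"
  shows "(THE j. 1 \<le> j \<and> j \<le> length xs \<and> xs ! (j - 1) = xs ! i) = Suc i"
proof (rule the_equality)
  fix j assume "1 \<le> j \<and> j \<le> length xs \<and> xs ! (j - 1) = xs ! i"
  then show "j = Suc i"
    using assms nth_eq_iff_index_eq[of xs "j - 1" i] by auto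
qed (use assms in auto)

lemma sorted_wrt_concat_map:
  assumes "sorted_wrt Q ws" "\<forall>w \<in> set ws. sorted_wrt R (g w)"
    "\<forall>w \<in> set ws. \<forall>w' \<in> set ws. Q w w' \<longrightarrow> (\<forall>x \<in> set (g w). \<forall>y \<in> set (g w'). R x y)"
  shows "sorted_wrt R (concat (map g ws))"
  using assms by (induction ws) (auto simp: sorted_wrt_append)

(* Sn_less y x: y comes before x in S_n. *)
definition Sn_less :: "bool list \<Rightarrow> bool list \<Rightarrow> bool" where
  "Sn_less y x \<longleftrightarrow>
     (if odd (weight x)
      then odd (weight y) \<and> weight y < weight x \<or> weight y = weight x \<and> x < y
      else odd (weight y) \<or> weight x < weight y \<or> weight y = weight x \<and> y < x)"

lemma Sn_less_asym: "Sn_less x y \<Longrightarrow> \<not> Sn_less y x"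
  unfolding Sn_less_def by (metis less_asym less_not_refl)

lemma set_Sseq: "set (Sseq n i) = {x. length x = n \<and> weight x = i}"
  by (simp add: Sseq_def finite_bool_lists_length)

lemma set_Sn: "set (Sn n) = Qv n"
proof -
  have "weight x \<in> set [0..<Suc n]" if "length x = n" for x :: "bool list"
    using weight_le_length[of x] that by (simp del: upt_Suc)
  then show ?thesis
    by (auto simp: Sn_def Rseq_def set_Sseq Qv_def simp del: upt_Suc)
qed

lemma sorted_Sn: "sorted_wrt Sn_less (Sn n)"
  unfolding Sn_def sorted_wrt_append
proof (intro conjI ballI)
  show "sorted_wrt Sn_less (concat (map (Rseq n) (filter odd [0..<Suc n])))"
  proof (rule sorted_wrt_concat_map[where Q = "(<)"])
    show "\<forall>w \<in> set (filter odd [0..<Suc n]). sorted_wrt Sn_less (Rseq n w)"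
      unfolding Rseq_def sorted_wrt_rev Sseq_def
      by (intro ballI sorted_wrt_mono_rel[OF _ strict_sorted_list_of_set])
        (auto simp: Sn_less_def finite_bool_lists_length simp del: upt_Suc)
  qed (auto simp: sorted_wrt_filter Rseq_def set_Sseq Sn_less_def simp del: upt_Suc)
  show "sorted_wrt Sn_less (concat (map (Sseq n) (rev (filter even [0..<Suc n]))))"
  proof (rule sorted_wrt_concat_map[where Q = "(>)"])
    show "\<forall>w \<in> set (rev (filter even [0..<Suc n])). sorted_wrt Sn_less (Sseq n w)"
      unfolding Sseq_def
      by (intro ballI sorted_wrt_mono_rel[OF _ strict_sorted_list_of_set])
        (auto simp: Sn_less_def finite_bool_lists_length simp del: upt_Suc)
  qed (auto simp: sorted_wrt_rev sorted_wrt_filter set_Sseq Sn_less_def simp del: upt_Suc)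
qed (auto simp: Rseq_def set_Sseq Sn_less_def simp del: upt_Suc)

lemma distinct_Sn: "distinct (Sn n)"
  using sorted_wrt_asym_distinct[OF sorted_Sn Sn_less_asym] .

lemma length_Sn: "length (Sn n) = 2 ^ n"
  using distinct_card[OF distinct_Sn] by (simp add: set_Sn card_Qv)

lemma fn_nth_Sn: "i < 2 ^ n \<Longrightarrow> fn n (Sn n ! i) = Suc i"
  unfolding fn_def using THE_position_nth[OF distinct_Sn] by (simp add: length_Sn)

lemma fn_eq_card_Sn_less:
  assumes "x \<in> Qv n"
  shows "fn n x = Suc (card {y \<in> Qv n. Sn_less y x})"
proof -
  obtain i where "i < 2 ^ n" "x = Sn n ! i"
    using assms by (metis in_set_conv_nth length_Sn set_Sn)
  then show ?thesis
    using sorted_wrt_card_predecessors[OF sorted_Sn Sn_less_asym, of i n]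
    by (simp add: fn_nth_Sn length_Sn set_Sn)
qed

lemma bij_betw_fn: "bij_betw (fn n) (Qv n) {1..card (Qv n)}"
proof -
  have nth: "bij_betw ((!) (Sn n)) {..<2 ^ n} (Qv n)"
    by (rule bij_betw_nth[OF distinct_Sn]) (simp_all add: length_Sn set_Sn)
  have "bij_betw (fn n \<circ> (!) (Sn n)) {..<2 ^ n} {1..2 ^ n}"
    by (rule bij_betw_cong[THEN iffD2, of _ _ Suc]) (simp_all add: fn_nth_Sn bij_betw_Suc image_Suc_lessThan)
  then show ?thesis
    unfolding card_Qv bij_betw_comp_iff[OF nth] .
qed

section \<open>The two endpoints of an edge\<close>

lemma fn_odd_weight:
  assumes x: "x \<in> Qv n" and odd: "odd (weight x)"
  shows "int (fn n x) = layer_count n (\<lambda>i. odd i \<and> i < weight x) + int (n choose weight x) - int (lex_rank x)"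
proof -
  let ?lower = "{y :: bool list. length y = n \<and> odd (weight y) \<and> weight y < weight x}"
  let ?greater = "{y. length y = n \<and> weight y = weight x \<and> x < y}"
  have "{y \<in> Qv n. Sn_less y x} = ?lower \<union> ?greater"
    using odd by (auto simp: Qv_def Sn_less_def)
  moreover have "?lower \<inter> ?greater = {}"
    by auto
  ultimately have "card {y \<in> Qv n. Sn_less y x} = card ?lower + card ?greater"
    by (simp add: card_Un_disjoint finite_bool_lists_length)
  moreover have "card ?greater + lex_rank x + 1 = n choose weight x"
    using card_lex_greater[of x] x by (simp add: Qv_def)
  moreover have "int (card ?lower) = layer_count n (\<lambda>i. odd i \<and> i < weight x)"
    using card_weight_in[of n "\<lambda>i. odd i \<and> i < weight x"] by simp
  ultimately show ?thesis
    using fn_eq_card_Sn_less[OF x] by simp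
qed

lemma fn_even_weight:
  assumes x: "x \<in> Qv n" and even: "even (weight x)"
  shows "int (fn n x) = layer_count n (\<lambda>i. odd i \<or> weight x < i) + int (lex_rank x) + 1"
proof -
  let ?higher = "{y :: bool list. length y = n \<and> (odd (weight y) \<or> weight x < weight y)}"
  let ?smaller = "{y. length y = n \<and> weight y = weight x \<and> y < x}"
  have "{y \<in> Qv n. Sn_less y x} = ?higher \<union> ?smaller"
    using even by (auto simp: Qv_def Sn_less_def)
  moreover have "?higher \<inter> ?smaller = {}"
    using even by auto
  ultimately have "card {y \<in> Qv n. Sn_less y x} = card ?higher + card ?smaller"
    by (simp add: card_Un_disjoint finite_bool_lists_length)
  moreover have "card ?smaller = lex_rank x"
    using x by (simp add: lex_rank_eq_card Qv_def)
  moreover have "int (card ?higher) = layer_count n (\<lambda>i. odd i \<or> weight x < i)"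
    using card_weight_in[of n "\<lambda>i. odd i \<or> weight x < i"] by simp
  ultimately show ?thesis
    using fn_eq_card_Sn_less[OF x] by simp
qed

lemma layer_count_odd_le:
  assumes "odd t" "t \<le> n"
  shows "layer_count n (\<lambda>i. odd i \<and> i < t) + int (n choose t) = layer_count n (\<lambda>i. odd i \<and> i \<le> t)"
proof -
  have "layer_count n (\<lambda>i. odd i \<and> i \<le> t) = layer_count n (\<lambda>i. (odd i \<and> i < t) \<or> i = t)"
    using assms(1) by (intro layer_count_cong) auto
  then show ?thesis
    using layer_count_add_layer[OF assms(2), of "\<lambda>i. odd i \<and> i < t"] by simp
qed

(* The identity sum_{i <= t} (-1)^i C(m + 1, i) = (-1)^t C(m, t) in disguise. *)
lemma layer_count_parity_identity:
  assumes "t \<le> Suc m"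
  shows "layer_count (Suc m) (\<lambda>i. odd i \<and> i \<le> t) + layer_count (Suc m) (\<lambda>i. odd i \<or> t < i)
    = 2 ^ Suc m + (if odd t then int (m choose t) else - int (m choose t))"
  using assms
proof (induction t)
  case 0
  have "layer_count (Suc m) (\<lambda>i. odd i \<or> 0 < i) + int (Suc m choose 0)
      = layer_count (Suc m) (\<lambda>i. (odd i \<or> 0 < i) \<or> i = 0)"
    by (rule layer_count_add_layer) auto
  also have "\<dots> = layer_count (Suc m) (\<lambda>_. True)"
    by (rule layer_count_cong) auto
  finally have "layer_count (Suc m) (\<lambda>i. odd i \<or> 0 < i) + 1 = 2 ^ Suc m"
    by (simp add: layer_count_True)
  moreover have "layer_count (Suc m) (\<lambda>i. odd i \<and> i \<le> 0) = layer_count (Suc m) (\<lambda>_. False)"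
    by (rule layer_count_cong) auto
  ultimately show ?case
    by (simp add: layer_count_False)
next
  case (Suc t)
  have pascal: "int (Suc m choose Suc t) = int (m choose t) + int (m choose Suc t)"
    by simp
  show ?case
  proof (cases "odd (Suc t)")
    case True
    have "layer_count (Suc m) (\<lambda>i. odd i \<and> i \<le> Suc t)
        = layer_count (Suc m) (\<lambda>i. odd i \<and> i \<le> t) + int (Suc m choose Suc t)"
      using layer_count_odd_le[OF True Suc.prems] by (simp add: less_Suc_eq_le)
    moreover have "layer_count (Suc m) (\<lambda>i. odd i \<or> Suc t < i) = layer_count (Suc m) (\<lambda>i. odd i \<or> t < i)"
      using True by (intro layer_count_cong) presburger
    ultimately show ?thesis
      using Suc True pascal by simp
  next
    case False
    have "layer_count (Suc m) (\<lambda>i. odd i \<and> i \<le> Suc t) = layer_count (Suc m) (\<lambda>i. odd i \<and> i \<le> t)"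
      using False by (intro layer_count_cong) (auto simp: le_Suc_eq)
    moreover have "layer_count (Suc m) (\<lambda>i. (odd i \<or> Suc t < i) \<or> i = Suc t)
        = layer_count (Suc m) (\<lambda>i. odd i \<or> t < i)"
      by (intro layer_count_cong) auto
    moreover have "layer_count (Suc m) (\<lambda>i. odd i \<or> Suc t < i) + int (Suc m choose Suc t)
        = layer_count (Suc m) (\<lambda>i. (odd i \<or> Suc t < i) \<or> i = Suc t)"
      using False by (intro layer_count_add_layer[OF Suc.prems]) simp
    ultimately show ?thesis
      using Suc False pascal by simp
  qed
qed

definition flip_gap :: "bool list \<Rightarrow> bool list \<Rightarrow> int" where
  "flip_gap a b = int (lex_rank (a @ True # b)) - int (lex_rank (a @ False # b))
     - int ((length a + length b) choose Suc (weight a + weight b))"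

lemma fn_flip_sum:
  assumes "length a + length b = m"
  shows "int (fn (Suc m) (a @ True # b)) + int (fn (Suc m) (a @ False # b))
    = 2 ^ Suc m + 1 + (if even (weight a + weight b) then - flip_gap a b else flip_gap a b)"
proof -
  let ?p = "a @ True # b" and ?q = "a @ False # b"
  let ?t = "Suc (weight a + weight b)"
  have p: "?p \<in> Qv (Suc m)" and q: "?q \<in> Qv (Suc m)"
    using assms by (simp_all add: Qv_def)
  have t: "?t \<le> Suc m"
    using assms weight_le_length[of a] weight_le_length[of b] by simp
  have identity: "layer_count (Suc m) (\<lambda>i. odd i \<and> i \<le> ?t) + layer_count (Suc m) (\<lambda>i. odd i \<or> ?t < i)
      = 2 ^ Suc m + (if odd ?t then int (m choose ?t) else - int (m choose ?t))"
    by (rule layer_count_parity_identity[OF t])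
  show ?thesis
  proof (cases "even (weight a + weight b)")
    case True
    have "layer_count (Suc m) (\<lambda>i. odd i \<or> weight a + weight b < i) = layer_count (Suc m) (\<lambda>i. odd i \<or> ?t < i)"
      using True by (intro layer_count_cong) presburger
    then show ?thesis
      using fn_odd_weight[OF p] fn_even_weight[OF q] layer_count_odd_le[OF _ t] identity True assms
      by (simp add: flip_gap_def)
  next
    case False
    have "layer_count (Suc m) (\<lambda>i. odd i \<and> i \<le> weight a + weight b) = layer_count (Suc m) (\<lambda>i. odd i \<and> i \<le> ?t)"
      using False by (intro layer_count_cong) (auto simp: le_Suc_eq)
    then show ?thesis
      using fn_even_weight[OF p] fn_odd_weight[OF q] layer_count_odd_le[OF False] t identity False assms
      by (simp add: flip_gap_def)
  qed
qed

lemma flip_gap_Nil [simp]: "flip_gap [] b = 0"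
  by (simp add: flip_gap_def)

lemma flip_gap_Cons [simp]:
  "flip_gap (c # a) b = flip_gap a b - int ((length a + length b) choose (weight a + weight b))"
  by (cases c) (simp_all add: flip_gap_def)

lemma flip_gap_nonpos: "flip_gap a b \<le> 0"
  by (induction a) simp_all

lemma flip_gap_lower_bound:
  "- (\<Sum>j < length a + length b. int (j choose (j div 2))) \<le> flip_gap a b"
proof (induction a)
  case Nil
  show ?case
    by (simp add: sum_nonneg)
next
  case (Cons c a)
  have "(length a + length b) choose (weight a + weight b)
      \<le> (length a + length b) choose ((length a + length b) div 2)"
    by (rule binomial_maximum)
  with Cons show ?case
    by simp
qed

(* Every suffix of length j has weight j div 2, so flip_gap_Cons subtracts central
   binomial coefficients only. *)
fun alternating_bits :: "nat \<Rightarrow> bool list" where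
  "alternating_bits 0 = []"
| "alternating_bits (Suc l) = odd l # alternating_bits l"

lemma length_alternating_bits [simp]: "length (alternating_bits l) = l"
  by (induction l) simp_all

lemma weight_alternating_bits [simp]: "weight (alternating_bits l) = l div 2"
  by (induction l) simp_all

lemma flip_gap_alternating_bits:
  "flip_gap (alternating_bits l) [] = - (\<Sum>j<l. int (j choose (j div 2)))"
  by (induction l) simp_all

section \<open>The strength of f_n\<close>

lemma Qadj_flip: "Qadj (Suc (length a + length b)) (a @ True # b) (a @ False # b)"
proof -
  have "{i. i < Suc (length a + length b) \<and> (a @ True # b) ! i \<noteq> (a @ False # b) ! i} = {length a}"
    by (auto simp: nth_append nth_Cons')
  then show ?thesis
    by (simp add: Qadj_def)
qed

lemma Qadj_obtain_flip:
  assumes "length x = n" "length y = n" "Qadj n x y"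
  obtains a b where "x = a @ True # b \<and> y = a @ False # b \<or> x = a @ False # b \<and> y = a @ True # b"
proof -
  obtain k where k: "{i. i < n \<and> x ! i \<noteq> y ! i} = {k}"
    using assms(3) unfolding Qadj_def by (rule card_1_singletonE)
  then have "k < n" "x ! k \<noteq> y ! k"
    by auto
  have same: "x ! i = y ! i" if "i < n" "i \<noteq> k" for i
    using k that by blast
  have "take k x = take k y" "drop (Suc k) x = drop (Suc k) y"
    using assms(1,2) same by (auto intro: nth_equalityI)
  moreover have "x = take k x @ x ! k # drop (Suc k) x" "y = take k y @ y ! k # drop (Suc k) y"
    using \<open>k < n\<close> assms(1,2) by (simp_all add: id_take_nth_drop)
  ultimately show ?thesis
    using \<open>x ! k \<noteq> y ! k\<close> that by (cases "x ! k") (metis (full_types))+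
qed

lemma finite_edge_sums:
  "finite V \<Longrightarrow> finite {f u + f v | u v. u \<in> V \<and> v \<in> V \<and> E u v}"
  by (rule finite_subset[of _ "(\<lambda>(u, v). f u + f v) ` (V \<times> V)"]) auto

lemma edge_sum_le_str_of:
  "finite V \<Longrightarrow> u \<in> V \<Longrightarrow> v \<in> V \<Longrightarrow> E u v \<Longrightarrow> f u + f v \<le> str_of f V E"
  unfolding str_of_def by (rule Max_ge[OF finite_edge_sums]) auto

lemma str_of_le:
  assumes "finite V" "u \<in> V" "v \<in> V" "E u v"
    and "\<And>u v. u \<in> V \<Longrightarrow> v \<in> V \<Longrightarrow> E u v \<Longrightarrow> f u + f v \<le> B"
  shows "str_of f V E \<le> B"
  unfolding str_of_def using assms by (intro Max.boundedI finite_edge_sums) auto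

lemma str_of_cong:
  assumes "\<And>v. v \<in> V \<Longrightarrow> f v = g v"
  shows "str_of f V E = str_of g V E"
proof -
  have "{f u + f v | u v. u \<in> V \<and> v \<in> V \<and> E u v} = {g u + g v | u v. u \<in> V \<and> v \<in> V \<and> E u v}"
    by (intro Collect_cong) (metis assms)
  then show ?thesis
    by (simp add: str_of_def)
qed

lemma strength_le_str_of:
  assumes "finite V" "bij_betw f V {1..card V}"
  shows "strength V E \<le> str_of f V E"
proof -
  have "{str_of g V E | g. bij_betw g V {1..card V}} \<subseteq> (\<lambda>g. str_of g V E) ` (V \<rightarrow>\<^sub>E {1..card V})"
  proof clarify
    fix g assume "bij_betw g V {1..card V}"
    then have "restrict g V \<in> V \<rightarrow>\<^sub>E {1..card V}" and "str_of g V E = str_of (restrict g V) V E"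
      by (auto simp: bij_betw_def intro: str_of_cong)
    then show "str_of g V E \<in> (\<lambda>g. str_of g V E) ` (V \<rightarrow>\<^sub>E {1..card V})"
      by blast
  qed
  then have "finite {str_of g V E | g. bij_betw g V {1..card V}}"
    using assms(1) by (rule finite_subset[OF _ finite_imageI[OF finite_PiE]]) simp
  then show ?thesis
    unfolding strength_def using assms(2) by (blast intro: Min_le)
qed

lemma str_of_fn_le:
  "str_of (fn (Suc m)) (Qv (Suc m)) (Qadj (Suc m)) \<le> 2 ^ Suc m + 1 + (\<Sum>j<m. j choose (j div 2))"
proof (rule str_of_le[OF finite_Qv])
  show "[] @ True # replicate m False \<in> Qv (Suc m)" "[] @ False # replicate m False \<in> Qv (Suc m)"
    by (simp_all add: Qv_def)
  show "Qadj (Suc m) ([] @ True # replicate m False) ([] @ False # replicate m False)"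
    using Qadj_flip[of "[]" "replicate m False"] by simp
next
  fix u v assume "u \<in> Qv (Suc m)" "v \<in> Qv (Suc m)" "Qadj (Suc m) u v"
  then have u: "length u = Suc m" and "length v = Suc m" "Qadj (Suc m) u v"
    by (simp_all add: Qv_def)
  then obtain a b where ab: "u = a @ True # b \<and> v = a @ False # b \<or> u = a @ False # b \<and> v = a @ True # b"
    by (rule Qadj_obtain_flip)
  then have m: "length a + length b = m"
    using u by auto
  have "int (fn (Suc m) (a @ True # b)) + int (fn (Suc m) (a @ False # b))
      \<le> 2 ^ Suc m + 1 + (\<Sum>j<m. int (j choose (j div 2)))"
    using fn_flip_sum[OF m] flip_gap_nonpos[of a b] flip_gap_lower_bound[of a b] m by simp
  then have "int (fn (Suc m) (a @ True # b) + fn (Suc m) (a @ False # b))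
      \<le> int (2 ^ Suc m + 1 + (\<Sum>j<m. j choose (j div 2)))"
    by (simp add: of_nat_sum)
  then have "fn (Suc m) (a @ True # b) + fn (Suc m) (a @ False # b)
      \<le> 2 ^ Suc m + 1 + (\<Sum>j<m. j choose (j div 2))"
    by (simp only: of_nat_le_iff)
  then show "fn (Suc m) u + fn (Suc m) v \<le> 2 ^ Suc m + 1 + (\<Sum>j<m. j choose (j div 2))"
    using ab by auto
qed

lemma str_of_fn_ge:
  "2 ^ Suc (Suc l) + 1 + (\<Sum>j<Suc l. j choose (j div 2)) \<le> str_of (fn (Suc (Suc l))) (Qv (Suc (Suc l))) (Qadj (Suc (Suc l)))"
proof -
  define a where "a = odd (l div 2) # alternating_bits l"
  have length: "length a + length [] = Suc l" and even: "even (weight a + weight [])"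
    by (simp_all add: a_def)
  have "flip_gap a [] = - (\<Sum>j<Suc l. int (j choose (j div 2)))"
    by (simp add: a_def flip_gap_alternating_bits)
  then have "int (fn (Suc (Suc l)) (a @ [True])) + int (fn (Suc (Suc l)) (a @ [False]))
      = 2 ^ Suc (Suc l) + 1 + (\<Sum>j<Suc l. int (j choose (j div 2)))"
    using fn_flip_sum[OF length] even by simp
  then have "int (fn (Suc (Suc l)) (a @ [True]) + fn (Suc (Suc l)) (a @ [False]))
      = int (2 ^ Suc (Suc l) + 1 + (\<Sum>j<Suc l. j choose (j div 2)))"
    by (simp add: of_nat_sum)
  moreover have "fn (Suc (Suc l)) (a @ [True]) + fn (Suc (Suc l)) (a @ [False])
      \<le> str_of (fn (Suc (Suc l))) (Qv (Suc (Suc l))) (Qadj (Suc (Suc l)))"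
    using Qadj_flip[of a "[]"] length by (intro edge_sum_le_str_of[OF finite_Qv]) (simp_all add: Qv_def)
  ultimately show ?thesis
    by (simp only: of_nat_eq_iff)
qed

lemma str_of_fn:
  assumes "2 \<le> n"
  shows "str_of (fn n) (Qv n) (Qadj n) = 2 ^ n + 1 + (\<Sum>j<n - 1. j choose (j div 2))"
proof -
  obtain l where "n = Suc (Suc l)"
    using assms by (metis add_2_eq_Suc le_Suc_ex)
  then show ?thesis
    using str_of_fn_le[of "Suc l"] str_of_fn_ge[of l] by simp
qed

lemma binomial_ceiling_half: "k choose nat \<lceil>real k / 2\<rceil> = k choose (k div 2)"
proof -
  have "nat \<lceil>real k / 2\<rceil> = k - k div 2"
  proof (cases "even k")
    case False
    then obtain j where k: "k = 2 * j + 1"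
      by (rule oddE)
    have "\<lceil>real k / 2\<rceil> = int j + 1"
      by (rule ceiling_unique) (simp_all add: k field_simps)
    then show ?thesis
      using k by simp
  qed auto
  then show ?thesis
    by (simp add: binomial_symmetric[symmetric])
qed

theorem corollary2p9:
  fixes n :: nat
  assumes "n \<ge> 5"
  shows "strength (Qv n) (Qadj n)
    \<le> str_of (fn (n - 2)) (Qv (n - 2)) (Qadj (n - 2)) + 3 * 2 ^ (n - 2)
       + ((n - 3) choose nat \<lceil>real (n - 3) / 2\<rceil>)
       + ((n - 2) choose nat \<lceil>real (n - 2) / 2\<rceil>)"
proof -
  define k where "k = n - 3"
  have n: "n = k + 3"
    using assms by (simp add: k_def)
  have "strength (Qv n) (Qadj n) \<le> str_of (fn n) (Qv n) (Qadj n)"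
    by (rule strength_le_str_of[OF finite_Qv bij_betw_fn])
  also have "\<dots> = 2 ^ n + 1 + (\<Sum>j<n - 1. j choose (j div 2))"
    using assms by (simp add: str_of_fn)
  also have "\<dots> = (2 ^ (n - 2) + 1 + (\<Sum>j<n - 3. j choose (j div 2))) + 3 * 2 ^ (n - 2)
      + ((n - 3) choose ((n - 3) div 2)) + ((n - 2) choose ((n - 2) div 2))"
    by (simp add: n power_add)
  also have "\<dots> = str_of (fn (n - 2)) (Qv (n - 2)) (Qadj (n - 2)) + 3 * 2 ^ (n - 2)
      + ((n - 3) choose ((n - 3) div 2)) + ((n - 2) choose ((n - 2) div 2))"
    using assms by (simp add: str_of_fn numeral_3_eq_3)
  finally show ?thesis
    by (simp only: binomial_ceiling_half)
qed

end
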